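(* Consider the discrete-time $Geo^X/G_r^{(a,b)}/1$ queue with single ($\delta=0$) or multiple ($\delta=1$) vacations described in the context, with $\rho<1$. Then for all $n\ge0$ and $a\le i\le b-1$, $$p^+_{n,i}=\Big[(1-\delta)\sum_{m=0}^{a-1}Q^+_m\sum_{j=m}^{a-1}e_{j,m}g_{i-j}+\big(p^+_i+Q^+_i\big)\Big]k^{(i)}_n,$$ where $k^{(i)}_n$ is the coefficient of $x^n$ in $K^{(i)}(x)$, i.e. the probability of $n$ arriving customers during the service time of a batch of size $i$.
   Context: Time is slotted. Fix integers $1\le a\le b$, $\lambda\in(0,1)$, $\bar\lambda=1-\lambda$, and a group-size distribution $(g_m)_{m\ge1}$ with finite mean $\bar g$ and pgf $G(z)=\sum_{m\ge1}g_mz^m$; $g_m=0$ for $m\le0$. In each slot a group arrives with probability $\lambda$, with size distribution $(g_m)$. Service follows the $(a,b)$ bulk rule (start only if at least $a$ wait; take all if $a\le r\le b$ wait, exactly $b$ if more than $b$ wait). A batch of size $r$ ($a\le r\le b$) has service-time pmf $s_r(n)$, $n\ge1$, pgf $S_r^*(z)$, mean $s_r$, $\mu_b=1/s_b$. Vacation times have pmf $v_n$, $n\ge1$, pgf $V^*(z)$, finite mean. $\delta=0$: single vacation (server stays dormant after a vacation until $a$ wait); $\delta=1$: multiple vacations. $\rho=\lambda\bar g/(b\mu_b)<1$. Stationary probabilities $p_{n,0}$ ($0\le n\le a-1$, dormant), $p_{n,r}(u)$ ($n\ge0$ waiting, batch size $a\le r\le b$ in service, remaining service $u\ge1$), $Q_n(u)$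 ($n\ge0$ waiting, on vacation, remaining vacation $u\ge1$) satisfy: (E1) $p_{0,0}=(1-\delta)[\bar\lambda p_{0,0}+\bar\lambda Q_0(1)]$; (E2) $p_{n,0}=(1-\delta)[\bar\lambda p_{n,0}+\lambda\sum_{i=1}^ng_ip_{n-i,0}+\bar\lambda Q_n(1)+\lambda\sum_{i=1}^ng_iQ_{n-i}(1)]$, $1\le n\le a-1$; (E3) $p_{0,r}(u)=\bar\lambda p_{0,r}(u+1)+s_r(u)\big[\sum_{m=a}^b(\bar\lambda p_{r,m}(1)+\lambda\sum_{i=1}^rg_ip_{r-i,m}(1))+\bar\lambda Q_r(1)+\lambda\sum_{i=1}^rg_iQ_{r-i}(1)+(1-\delta)\lambda\sum_{i=0}^{a-1}g_{r-i}p_{i,0}\big]$, $a\le r\le b$; (E4) $p_{n,r}(u)=\bar\lambda p_{n,r}(u+1)+\lambda\sum_{i=1}^ng_ip_{n-i,r}(u+1)$, $n\ge1$, $a\le r\le b-1$; (E5) $p_{n,b}(u)=\bar\lambda p_{n,b}(u+1)+\lambda\sum_{i=1}^ng_ip_{n-i,b}(u+1)+s_b(u)\big[\sum_{m=a}^b(\bar\lambda p_{n+b,m}(1)+\lambda\sum_{i=1}^{n+b}g_ip_{n+b-i,m}(1))+\bar\lambda Q_{n+b}(1)+\lambda\sum_{i=1}^{n+b}g_iQ_{n+b-i}(1)+(1-\delta)\lambda\sum_{i=0}^{a-1}g_{n+b-i}p_{i,0}\big]$, $n\ge1$; (E6) $Q_0(u)=\bar\lambda Q_0(u+1)+\bar\lambda(\sum_{m=a}^bp_{0,m}(1)+\delta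 Q_0(1))v_u$; (E7) $Q_n(u)=\bar\lambda Q_n(u+1)+\lambda\sum_{i=1}^ng_iQ_{n-i}(u+1)+v_u\big[\bar\lambda(\sum_{m=a}^bp_{n,m}(1)+\delta Q_n(1))+\lambda\sum_{i=1}^ng_i(\sum_{m=a}^bp_{n-i,m}(1)+\delta Q_{n-i}(1))\big]$, $1\le n\le a-1$; (E8) $Q_n(u)=\bar\lambda Q_n(u+1)+\lambda\sum_{i=1}^ng_iQ_{n-i}(u+1)$, $n\ge a$; (N) $(1-\delta)\sum_{n=0}^{a-1}p_{n,0}+\sum_{n,r,u}p_{n,r}(u)+\sum_{n,u}Q_n(u)=1$. With $\tau=\sum_{m\ge0}\sum_{r=a}^bp_{m,r}(1)+\sum_{m\ge0}Q_m(1)$: $p^+_{0,r}=\tau^{-1}\bar\lambda p_{0,r}(1)$, $p^+_{n,r}=\tau^{-1}(\bar\lambda p_{n,r}(1)+\lambda\sum_{i=1}^ng_ip_{n-i,r}(1))$ ($n\ge1$, $a\le r\le b$) are the joint queue/server-content probabilities at service completion epochs; $p^+_n=\sum_{r=a}^bp^+_{n,r}$; $Q^+_0=\tau^{-1}\bar\lambda Q_0(1)$, $Q^+_n=\tau^{-1}(\bar\lambda Q_n(1)+\lambda\sum_{i=1}^ng_iQ_{n-i}(1))$ ($n\ge1$). $K^{(r)}(x)=S_r^*(\bar\lambda+\lambda G(x))$. $e_{n,i}$ ($0\le i\le n$): $e_{n,n}=1$, $e_{n,n-1}=g_1$, $e_{n,i}=\sum_{j=i+1}^{n-1}e_{n,j}g_{j-i}+g_{n-i}$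 for $0\le i\le n-2$. *)

theory Defs
  imports "HOL-Analysis.Analysis" "HOL-Computational_Algebra.Formal_Power_Series"
begin

text \<open>Discrete-time Geo^X/G_r^(a,b)/1 queue with single/multiple vacations.
  lam = arrival probability per slot, g = group-size pmf (g 0 = 0),
  s r = service-time pmf of a batch of size r (s r 0 = 0), v = vacation-time pmf (v 0 = 0),
  del = 0 (single vacation) or 1 (multiple vacations).
  Unknowns: p0 n (dormant, n waiting), p n r u (n waiting, batch r in service, remaining
  service u), Q n u (n waiting, on vacation, remaining vacation u).\<close>

definition arr :: "real \<Rightarrow> (nat \<Rightarrow> real) \<Rightarrow> (nat \<Rightarrow> real) \<Rightarrow> nat \<Rightarrow> real" where
  "arr lam g f n = (1 - lam) * f n + lam * (\<Sum>i=1..n. g i * f (n - i))"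

definition pmf_mean :: "(nat \<Rightarrow> real) \<Rightarrow> real" where
  "pmf_mean f = (\<Sum>n. real n * f n)"

definition pos_pmf :: "(nat \<Rightarrow> real) \<Rightarrow> bool" where
  "pos_pmf f \<longleftrightarrow> f 0 = 0 \<and> (\<forall>n. f n \<ge> 0) \<and> f sums 1 \<and> summable (\<lambda>n. real n * f n)"

definition balance_eqs ::
  "real \<Rightarrow> (nat \<Rightarrow> real) \<Rightarrow> (nat \<Rightarrow> nat \<Rightarrow> real) \<Rightarrow> (nat \<Rightarrow> real) \<Rightarrow> nat \<Rightarrow> nat \<Rightarrow> real
   \<Rightarrow> (nat \<Rightarrow> real) \<Rightarrow> (nat \<Rightarrow> nat \<Rightarrow> nat \<Rightarrow> real) \<Rightarrow> (nat \<Rightarrow> nat \<Rightarrow> real) \<Rightarrow> bool" where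
  "balance_eqs lam g s v a b del p0 p Q \<longleftrightarrow>
    \<comment> \<open>(E1)\<close>
    p0 0 = (1 - del) * ((1 - lam) * p0 0 + (1 - lam) * Q 0 1) \<and>
    \<comment> \<open>(E2)\<close>
    (\<forall>n. 1 \<le> n \<and> n \<le> a - 1 \<longrightarrow>
       p0 n = (1 - del) * (arr lam g p0 n + arr lam g (\<lambda>k. Q k 1) n)) \<and>
    \<comment> \<open>(E3)\<close>
    (\<forall>r u. a \<le> r \<and> r \<le> b \<and> 1 \<le> u \<longrightarrow>
       p 0 r u = (1 - lam) * p 0 r (u + 1) + s r u *
         ((\<Sum>m=a..b. arr lam g (\<lambda>k. p k m 1) r) + arr lam g (\<lambda>k. Q k 1) r
          + (1 - del) * lam * (\<Sum>i=0..a-1. g (r - i) * p0 i))) \<and>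
    \<comment> \<open>(E4)\<close>
    (\<forall>n r u. 1 \<le> n \<and> a \<le> r \<and> r \<le> b - 1 \<and> 1 \<le> u \<longrightarrow>
       p n r u = arr lam g (\<lambda>k. p k r (u + 1)) n) \<and>
    \<comment> \<open>(E5)\<close>
    (\<forall>n u. 1 \<le> n \<and> 1 \<le> u \<longrightarrow>
       p n b u = arr lam g (\<lambda>k. p k b (u + 1)) n + s b u *
         ((\<Sum>m=a..b. arr lam g (\<lambda>k. p k m 1) (n + b)) + arr lam g (\<lambda>k. Q k 1) (n + b)
          + (1 - del) * lam * (\<Sum>i=0..a-1. g (n + b - i) * p0 i))) \<and>
    \<comment> \<open>(E6)\<close>
    (\<forall>u. 1 \<le> u \<longrightarrow>
       Q 0 u = (1 - lam) * Q 0 (u + 1) + (1 - lam) * ((\<Sum>m=a..b. p 0 m 1) + del * Q 0 1) * v u) \<and>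
    \<comment> \<open>(E7)\<close>
    (\<forall>n u. 1 \<le> n \<and> n \<le> a - 1 \<and> 1 \<le> u \<longrightarrow>
       Q n u = arr lam g (\<lambda>k. Q k (u + 1)) n
               + v u * arr lam g (\<lambda>k. (\<Sum>m=a..b. p k m 1) + del * Q k 1) n) \<and>
    \<comment> \<open>(E8)\<close>
    (\<forall>n u. a \<le> n \<and> 1 \<le> u \<longrightarrow> Q n u = arr lam g (\<lambda>k. Q k (u + 1)) n)"

definition tau :: "(nat \<Rightarrow> nat \<Rightarrow> nat \<Rightarrow> real) \<Rightarrow> (nat \<Rightarrow> nat \<Rightarrow> real) \<Rightarrow> nat \<Rightarrow> nat \<Rightarrow> real" where
  "tau p Q a b = (\<Sum>\<^sub>\<infinity>(m, r)\<in>UNIV \<times> {a..b}. p m r 1) + (\<Sum>\<^sub>\<infinity>m\<in>UNIV. Q m 1)"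

text \<open>p^+_{n,r} (the n = 0 case is the same formula with an empty sum).\<close>
definition pplus :: "real \<Rightarrow> (nat \<Rightarrow> real) \<Rightarrow> (nat \<Rightarrow> nat \<Rightarrow> nat \<Rightarrow> real) \<Rightarrow> (nat \<Rightarrow> nat \<Rightarrow> real)
    \<Rightarrow> nat \<Rightarrow> nat \<Rightarrow> nat \<Rightarrow> nat \<Rightarrow> real" where
  "pplus lam g p Q a b n r = arr lam g (\<lambda>k. p k r 1) n / tau p Q a b"

definition pplus_tot :: "real \<Rightarrow> (nat \<Rightarrow> real) \<Rightarrow> (nat \<Rightarrow> nat \<Rightarrow> nat \<Rightarrow> real) \<Rightarrow> (nat \<Rightarrow> nat \<Rightarrow> real)
    \<Rightarrow> nat \<Rightarrow> nat \<Rightarrow> nat \<Rightarrow> real" where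
  "pplus_tot lam g p Q a b n = (\<Sum>r=a..b. pplus lam g p Q a b n r)"

definition Qplus :: "real \<Rightarrow> (nat \<Rightarrow> real) \<Rightarrow> (nat \<Rightarrow> nat \<Rightarrow> nat \<Rightarrow> real) \<Rightarrow> (nat \<Rightarrow> nat \<Rightarrow> real)
    \<Rightarrow> nat \<Rightarrow> nat \<Rightarrow> nat \<Rightarrow> real" where
  "Qplus lam g p Q a b n = arr lam g (\<lambda>k. Q k 1) n / tau p Q a b"

text \<open>e_{n,i}: e_{n,n} = 1, e_{n,n-1} = g_1, e_{n,i} = sum_{j=i+1}^{n-1} e_{n,j} g_{j-i} + g_{n-i}
  (the second clause is the i = n-1 instance of the third). Set to 0 for i > n (not used).\<close>
function ecoef :: "(nat \<Rightarrow> real) \<Rightarrow> nat \<Rightarrow> nat \<Rightarrow> real" where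
  "ecoef g n i = (if i = n then 1 else if n < i then 0
                  else (\<Sum>j\<in>{i+1..<n}. ecoef g n j * g (j - i)) + g (n - i))"
  by auto
termination by (relation "Wellfounded.measure (\<lambda>(g, n, i). n - i)") auto

text \<open>k^{(i)}_n = coefficient of x^n in K^{(i)}(x) = S_i^*(1 - lam + lam G(x))
   = sum_u s_i(u) [x^n] (1 - lam + lam G(x))^u.\<close>
definition kcoef :: "real \<Rightarrow> (nat \<Rightarrow> real) \<Rightarrow> (nat \<Rightarrow> nat \<Rightarrow> real) \<Rightarrow> nat \<Rightarrow> nat \<Rightarrow> real" where
  "kcoef lam g s i n =
     (\<Sum>u. s i u * fps_nth ((fps_const (1 - lam) + fps_const lam * Abs_fps g) ^ u) n)"

end

theory Submission
  imports Defs
begin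

(* A batch of size i < b is only formed when it empties the queue, so the states (n, i, u)
   with n \<ge> 1 receive no inflow apart from arrivals.  Hence the generating functions
   P_u(x) = sum_n p_{n,i}(u) x^n satisfy P_u = A P_{u+1} + s_i(u) C_i, where
   A(x) = 1 - lam + lam G(x) is the arrival pgf of one slot and C_i is the mass of batches
   of size i entering service.  Unrolling this recursion and letting u tend to infinity
   (the state probabilities are summable and the coefficients of A^u lie in [0,1]) gives
   A P_1 = C_i S_i(A), whose n-th coefficient is tau p^+_{n,i} = C_i k^(i)_n.
   In the single-vacation case C_i contains the dormant states, which are eliminated using
   (E1), (E2): they say lam p_{n,0} = lam sum_l g_l p_{n-l,0} + tau Q^+_n, a renewal
   equation solved by lam p_{n,0} = sum_m e_{n,m} tau Q^+_m. *)

unbundle no vec_syntax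
notation fps_nth (infixl \<open>$\<close> 75)

declare ecoef.simps [simp del]

lemma sum_triangle_swap:
  fixes h :: "nat \<Rightarrow> nat \<Rightarrow> 'a::comm_monoid_add"
  shows "(\<Sum>j=0..N. \<Sum>m=0..j. h j m) = (\<Sum>m=0..N. \<Sum>j=m..N. h j m)"
proof -
  have "(\<Sum>j=0..N. \<Sum>m\<in>{m. m \<in> {0..N} \<and> m \<le> j}. h j m)
      = (\<Sum>m=0..N. \<Sum>j\<in>{j. j \<in> {0..N} \<and> m \<le> j}. h j m)"
    by (rule sum.swap_restrict) simp_all
  moreover have "{m\<in>{0..N}. m \<le> j} = {0..j}" if "j \<le> N" for j
    using that by auto
  moreover have "{j\<in>{0..N}. m \<le> j} = {m..N}" for m
    by auto
  ultimately show ?thesis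
    by simp
qed

lemma summable_on_slice_tendsto_zero:
  fixes p :: "'a \<Rightarrow> 'b \<Rightarrow> nat \<Rightarrow> real"
  assumes "(\<lambda>(n, r, u). p n r u) summable_on (A \<times> B \<times> {1..})" and "n \<in> A" "r \<in> B"
  shows "(\<lambda>u. p n r u) \<longlonglongrightarrow> 0"
proof -
  let ?f = "\<lambda>x. norm ((\<lambda>(n, r, u). p n r u) x)"
  have "?f summable_on (A \<times> B \<times> {1..})"
    using assms(1) summable_on_iff_abs_summable_on_real by blast
  then have "?f summable_on ((\<lambda>u. (n, r, Suc u)) ` UNIV)"
    by (rule summable_on_subset_banach) (use assms(2,3) in auto)
  then have "(?f \<circ> (\<lambda>u. (n, r, Suc u))) summable_on UNIV"
    by (subst (asm) summable_on_reindex) (simp_all add: inj_on_def)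
  then have "summable (\<lambda>u. \<bar>p n r (Suc u)\<bar>)"
    by (simp add: o_def summable_on_UNIV_nonneg_real_iff)
  then have "(\<lambda>u. p n r (Suc u)) \<longlonglongrightarrow> 0"
    by (rule tendsto_rabs_zero_cancel[OF summable_LIMSEQ_zero])
  then show ?thesis
    by (rule LIMSEQ_imp_Suc)
qed

subsection \<open>Powers of a substochastic power series\<close>

lemma substochastic_fps_power_nth:
  fixes F :: "real fps"
  assumes nonneg: "\<And>k. 0 \<le> F $ k" and partial: "\<And>n. (\<Sum>k\<le>n. F $ k) \<le> 1"
  shows "0 \<le> (F ^ j) $ n" and "(F ^ j) $ n \<le> 1"
proof -
  define ones :: "real fps" where "ones = Abs_fps (\<lambda>_. 1)"
  have partial_sum: "(H * ones) $ n = (\<Sum>k\<le>n. H $ k)" for H n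
    by (simp add: ones_def fps_mult_nth atLeast0AtMost)
  have powers: "(\<forall>k. 0 \<le> (F ^ j) $ k) \<and> (\<forall>n. (\<Sum>k\<le>n. (F ^ j) $ k) \<le> 1)"
  proof (induction j)
    case 0
    show ?case
      by (simp add: fps_one_nth)
  next
    case (Suc j)
    have "0 \<le> (F ^ Suc j) $ k" for k
      using Suc nonneg by (simp add: fps_mult_nth sum_nonneg)
    moreover have "(\<Sum>k\<le>n. (F ^ Suc j) $ k) \<le> 1" for n
    proof -
      have "(\<Sum>k\<le>n. (F ^ Suc j) $ k) = (F * (F ^ j * ones)) $ n"
        by (simp only: partial_sum[symmetric] power_Suc mult.assoc)
      also have "\<dots> = (\<Sum>i=0..n. F $ i * (\<Sum>k\<le>n - i. (F ^ j) $ k))"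
        by (simp only: fps_mult_nth[of F] partial_sum)
      also have "\<dots> \<le> (\<Sum>i\<le>n. F $ i)"
        unfolding atLeast0AtMost using Suc nonneg by (intro sum_mono mult_left_le) auto
      finally show ?thesis
        using partial[of n] by linarith
    qed
    ultimately show ?case
      by blast
  qed
  then show "0 \<le> (F ^ j) $ n"
    by blast
  have "(F ^ j) $ n \<le> (\<Sum>k\<le>n. (F ^ j) $ k)"
    using powers by (intro member_le_sum) auto
  with powers show "(F ^ j) $ n \<le> 1"
    by (meson order_trans)
qed

definition arrival_fps :: "real \<Rightarrow> (nat \<Rightarrow> real) \<Rightarrow> real fps" where
  "arrival_fps lam g = fps_const (1 - lam) + fps_const lam * Abs_fps g"

lemma arrival_fps_nth: "arrival_fps lam g $ k = (if k = 0 then 1 - lam else 0) + lam * g k"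
  by (simp add: arrival_fps_def)

lemma arr_eq_arrival_fps_nth:
  assumes "g 0 = 0"
  shows "arr lam g f n = (arrival_fps lam g * Abs_fps f) $ n"
proof -
  have "(arrival_fps lam g * Abs_fps f) $ n
      = (\<Sum>i=0..n. (if i = 0 then 1 - lam else 0) * f (n - i)) + lam * (\<Sum>i=0..n. g i * f (n - i))"
    by (simp only: fps_mult_nth arrival_fps_nth fps_nth_Abs_fps)
       (simp add: algebra_simps sum.distrib sum_distrib_left)
  also have "(\<Sum>i=0..n. (if i = 0 then 1 - lam else 0) * f (n - i)) = (1 - lam) * f n"
    by (simp add: sum.atLeast_Suc_atMost)
  also have "(\<Sum>i=0..n. g i * f (n - i)) = (\<Sum>i=1..n. g i * f (n - i))"
    using assms by (simp add: sum.atLeast_Suc_atMost)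
  finally show ?thesis
    by (simp add: arr_def)
qed

lemma arrival_fps_power_nth:
  assumes "0 \<le> lam" "lam \<le> 1" and g: "\<And>k. 0 \<le> g k" "g sums 1"
  shows "0 \<le> (arrival_fps lam g ^ j) $ n" and "(arrival_fps lam g ^ j) $ n \<le> 1"
proof -
  have nonneg: "0 \<le> arrival_fps lam g $ k" for k
    using assms by (simp add: arrival_fps_nth)
  have partial: "(\<Sum>k\<le>m. arrival_fps lam g $ k) \<le> 1" for m
  proof -
    have "(\<Sum>k\<le>m. g k) \<le> suminf g"
      using g by (intro sum_le_suminf) (auto simp: sums_iff)
    then have "lam * (\<Sum>k\<le>m. g k) \<le> lam"
      using g(2) \<open>0 \<le> lam\<close> by (intro mult_left_le) (simp_all add: sums_iff)
    then show ?thesis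
      by (simp add: arrival_fps_nth sum.distrib flip: sum_distrib_left)
  qed
  show "0 \<le> (arrival_fps lam g ^ j) $ n" and "(arrival_fps lam g ^ j) $ n \<le> 1"
    using substochastic_fps_power_nth[OF nonneg partial] by blast+
qed

subsection \<open>Unrolling the remaining-time recursion\<close>

lemma unroll_remaining_time_recursion:
  fixes F :: "'a::comm_ring_1" and P c :: "nat \<Rightarrow> 'a"
  assumes "\<And>u. 1 \<le> u \<Longrightarrow> P u = F * P (u + 1) + c u"
  shows "F * P 1 = (\<Sum>k<K. c (k + 1) * F ^ (k + 1)) + F ^ (K + 1) * P (K + 1)"
proof (induction K)
  case 0
  show ?case
    by simp
next
  case (Suc K)
  have "F ^ (K + 1) * P (K + 1) = c (K + 1) * F ^ (K + 1) + F ^ (K + 2) * P (K + 2)"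
    using assms[of "K + 1"] by (simp add: algebra_simps)
  with Suc.IH show ?case
    by simp
qed

lemma fps_mult_nth_tendsto_zero:
  fixes G H :: "nat \<Rightarrow> real fps"
  assumes G: "\<And>K m. \<bar>G K $ m\<bar> \<le> 1" and H: "\<And>m. (\<lambda>K. H K $ m) \<longlonglongrightarrow> 0"
  shows "(\<lambda>K. (G K * H K) $ n) \<longlonglongrightarrow> 0"
  unfolding fps_mult_nth
proof (rule tendsto_null_sum, rule Lim_null_comparison)
  fix i
  show "\<forall>\<^sub>F K in sequentially. norm (G K $ i * H K $ (n - i)) \<le> \<bar>H K $ (n - i)\<bar>"
    using mult_left_le_one_le[OF abs_ge_zero abs_ge_zero G] by (simp add: abs_mult)
  show "(\<lambda>K. \<bar>H K $ (n - i)\<bar>) \<longlonglongrightarrow> 0"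
    using H by (rule tendsto_rabs_zero)
qed

lemma remaining_time_recursion_nth:
  fixes F :: "real fps" and P :: "nat \<Rightarrow> real fps" and s :: "nat \<Rightarrow> real"
  assumes rec: "\<And>u. 1 \<le> u \<Longrightarrow> P u = F * P (u + 1) + fps_const (s u * C)"
    and F: "\<And>j m. \<bar>(F ^ j) $ m\<bar> \<le> 1"
    and P: "\<And>m. (\<lambda>u. P u $ m) \<longlonglongrightarrow> 0"
    and s: "s 0 = 0" "summable (\<lambda>u. \<bar>s u\<bar>)"
  shows "(F * P 1) $ n = C * (\<Sum>u. s u * (F ^ u) $ n)"
proof -
  define f where "f u = s u * (F ^ u) $ n" for u
  have partial_sums: "C * (\<Sum>u<Suc K. f u) = (F * P 1) $ n - (F ^ (K + 1) * P (K + 1)) $ n" for K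
  proof -
    have "F * P 1 = (\<Sum>k<K. fps_const (s (k + 1) * C) * F ^ (k + 1)) + F ^ (K + 1) * P (K + 1)"
      using rec by (rule unroll_remaining_time_recursion)
    then have "(F * P 1) $ n = (\<Sum>k<K. s (k + 1) * C * (F ^ (k + 1)) $ n) + (F ^ (K + 1) * P (K + 1)) $ n"
      by (simp add: fps_sum_nth)
    also have "(\<Sum>k<K. s (k + 1) * C * (F ^ (k + 1)) $ n) = C * (\<Sum>u<Suc K. f u)"
      by (simp add: sum.lessThan_Suc_shift f_def s(1) sum_distrib_left algebra_simps
          del: sum.lessThan_Suc)
    finally show ?thesis
      by simp
  qed
  have "(\<lambda>K. (F ^ (K + 1) * P (K + 1)) $ n) \<longlonglongrightarrow> 0"
    by (rule fps_mult_nth_tendsto_zero[OF F]) (simp add: LIMSEQ_Suc[OF P])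
  then have "(\<lambda>K. C * (\<Sum>u<Suc K. f u)) \<longlonglongrightarrow> (F * P 1) $ n"
    unfolding partial_sums using tendsto_diff[OF tendsto_const] by fastforce
  moreover have "norm (f u) \<le> \<bar>s u\<bar>" for u
    using F[of u n] by (simp add: f_def abs_mult mult_left_le)
  then have "summable f"
    using s(2) by (rule summable_comparison_test'[rotated])
  then have "(\<lambda>K. C * (\<Sum>u<Suc K. f u)) \<longlonglongrightarrow> C * suminf f"
    by (intro tendsto_mult_left LIMSEQ_Suc summable_LIMSEQ)
  ultimately have "(F * P 1) $ n = C * suminf f"
    by (rule LIMSEQ_unique)
  then show ?thesis
    by (simp add: f_def [abs_def])
qed

subsection \<open>The coefficients e_{n,i}\<close>

lemma ecoef_eq_0: "n < i \<Longrightarrow> ecoef g n i = 0"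
  by (simp add: ecoef.simps)

lemma ecoef_diag [simp]: "ecoef g n n = 1"
  by (simp add: ecoef.simps)

lemma ecoef_shift: "m \<le> n \<Longrightarrow> ecoef g n m = ecoef g (n - m) 0"
proof (induction "n - m" arbitrary: n m rule: less_induct)
  case less
  show ?case
  proof (cases "m = n")
    case True
    then show ?thesis
      by simp
  next
    case False
    define d where "d = n - m"
    have "d > 0"
      using False less.prems by (simp add: d_def)
    have "ecoef g n m = (\<Sum>j\<in>{m+1..<n}. ecoef g n j * g (j - m)) + g d"
      using False less.prems by (simp add: ecoef.simps[of g n m] d_def)
    also have "(\<Sum>j\<in>{m+1..<n}. ecoef g n j * g (j - m)) = (\<Sum>j\<in>{1..<d}. ecoef g n (j + m) * g j)"
      using less.prems sum.shift_bounds_nat_ivl[of "\<lambda>j. ecoef g n j * g (j - m)" 1 m d]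
      by (simp add: d_def add.commute)
    also have "\<dots> = (\<Sum>j\<in>{1..<d}. ecoef g d j * g j)"
    proof (rule sum.cong [OF refl])
      fix j assume j: "j \<in> {1..<d}"
      then have "ecoef g n (j + m) = ecoef g (d - j) 0" and "ecoef g d j = ecoef g (d - j) 0"
        using less.hyps[of n "j + m"] less.hyps[of d j] less.prems by (auto simp: d_def add.commute)
      then show "ecoef g n (j + m) * g j = ecoef g d j * g j"
        by simp
    qed
    also have "\<dots> + g d = ecoef g d 0"
      using \<open>d > 0\<close> by (simp add: ecoef.simps[of g d 0])
    finally show ?thesis
      by (simp add: d_def)
  qed
qed

lemma ecoef_first_step:
  assumes "m \<le> n"
  shows "ecoef g n m = (if m = n then 1 else 0) + (\<Sum>l=1..n. g l * ecoef g (n - l) m)"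
proof (cases "m = n")
  case True
  then have "(\<Sum>l=1..n. g l * ecoef g (n - l) m) = 0"
    by (intro sum.neutral) (auto simp: ecoef_eq_0)
  with True show ?thesis
    by simp
next
  case False
  define d where "d = n - m"
  have "m < n"
    using False assms by simp
  have "ecoef g n m = (\<Sum>j\<in>{m+1..<n}. ecoef g n j * g (j - m)) + g (n - m)"
    using \<open>m < n\<close> by (simp add: ecoef.simps[of g n m])
  also have "\<dots> = (\<Sum>j\<in>{1+m..d+m}. ecoef g n j * g (j - m))"
    using \<open>m < n\<close> by (simp add: sum.last_plus d_def add.commute)
  also have "\<dots> = (\<Sum>l=1..d. ecoef g n (l + m) * g l)"
    unfolding sum.shift_bounds_cl_nat_ivl by simp
  also have "\<dots> = (\<Sum>l=1..d. g l * ecoef g (n - l) m)"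
  proof (rule sum.cong [OF refl])
    fix l assume "l \<in> {1..d}"
    then have "l + m \<le> n" "m \<le> n - l"
      by (auto simp: d_def)
    then have "ecoef g n (l + m) = ecoef g (n - l) m"
      by (simp add: ecoef_shift[of "l + m"] ecoef_shift[of m "n - l"] diff_diff_left add.commute)
    then show "ecoef g n (l + m) * g l = g l * ecoef g (n - l) m"
      by simp
  qed
  also have "\<dots> = (\<Sum>l=1..n. g l * ecoef g (n - l) m)"
    by (rule sum.mono_neutral_left) (auto simp: d_def ecoef_eq_0)
  finally show ?thesis
    using False by simp
qed

lemma renewal_solution_ecoef:
  fixes x q g :: "nat \<Rightarrow> real"
  assumes renewal: "\<And>n. n \<le> N \<Longrightarrow> x n = (\<Sum>l=1..n. g l * x (n - l)) + q n"
  shows "n \<le> N \<Longrightarrow> x n = (\<Sum>m=0..n. ecoef g n m * q m)"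
proof (induction n rule: less_induct)
  case (less n)
  have "x n = (\<Sum>l=1..n. g l * x (n - l)) + q n"
    using renewal[OF less.prems] .
  also have "(\<Sum>l=1..n. g l * x (n - l)) = (\<Sum>l=1..n. g l * (\<Sum>m=0..n - l. ecoef g (n - l) m * q m))"
    using less by (intro sum.cong refl) auto
  also have "(\<Sum>l=1..n. g l * (\<Sum>m=0..n - l. ecoef g (n - l) m * q m))
      = (\<Sum>l=1..n. \<Sum>m=0..n. g l * ecoef g (n - l) m * q m)"
    by (intro sum.cong refl) (simp add: sum_distrib_left mult.assoc sum.mono_neutral_left ecoef_eq_0)
  also have "\<dots> = (\<Sum>m=0..n. q m * (\<Sum>l=1..n. g l * ecoef g (n - l) m))"
    by (subst sum.swap) (simp add: sum_distrib_left algebra_simps)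
  also have "\<dots> + q n = (\<Sum>m=0..n. ecoef g n m * q m)"
  proof -
    have "(\<Sum>m=0..n. ecoef g n m * q m)
        = (\<Sum>m=0..n. (if m = n then q m else 0) + q m * (\<Sum>l=1..n. g l * ecoef g (n - l) m))"
      by (intro sum.cong refl) (simp add: ecoef_first_step algebra_simps)
    then show ?thesis
      by (simp add: sum.distrib)
  qed
  finally show ?case .
qed

subsection \<open>The balance equations\<close>

text \<open>The bracket multiplying s_r(u) in (E3).\<close>

definition service_start_mass ::
  "real \<Rightarrow> (nat \<Rightarrow> real) \<Rightarrow> nat \<Rightarrow> nat \<Rightarrow> real \<Rightarrow> (nat \<Rightarrow> real) \<Rightarrow> (nat \<Rightarrow> nat \<Rightarrow> nat \<Rightarrow> real)
    \<Rightarrow> (nat \<Rightarrow> nat \<Rightarrow> real) \<Rightarrow> nat \<Rightarrow> real" where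
  "service_start_mass lam g a b del p0 p Q r =
     (\<Sum>m=a..b. arr lam g (\<lambda>k. p k m 1) r) + arr lam g (\<lambda>k. Q k 1) r
     + (1 - del) * lam * (\<Sum>j=0..a-1. g (r - j) * p0 j)"

lemma balance_eqs_empty_queue:
  assumes "balance_eqs lam g s v a b del p0 p Q" and "a \<le> r" "r \<le> b" "1 \<le> u"
  shows "p 0 r u = (1 - lam) * p 0 r (u + 1) + s r u * service_start_mass lam g a b del p0 p Q r"
  using assms unfolding balance_eqs_def service_start_mass_def by blast

lemma balance_eqs_small_batch:
  assumes "balance_eqs lam g s v a b del p0 p Q" and "1 \<le> n" "a \<le> r" "r < b" "1 \<le> u"
  shows "p n r u = arr lam g (\<lambda>k. p k r (u + 1)) n"
proof -
  have "r \<le> b - 1"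
    using \<open>r < b\<close> by simp
  with assms show ?thesis
    unfolding balance_eqs_def by blast
qed

lemma balance_eqs_dormant_renewal:
  assumes "balance_eqs lam g s v a b 0 p0 p Q" and "n \<le> a - 1"
  shows "lam * p0 n = (\<Sum>l=1..n. g l * (lam * p0 (n - l))) + arr lam g (\<lambda>k. Q k 1) n"
proof -
  have "p0 n = arr lam g p0 n + arr lam g (\<lambda>k. Q k 1) n"
  proof (cases "n = 0")
    case True
    have "p0 0 = (1 - 0) * ((1 - lam) * p0 0 + (1 - lam) * Q 0 1)"
      using assms(1) unfolding balance_eqs_def by blast
    with True show ?thesis
      by (simp add: arr_def)
  next
    case False
    then have "p0 n = (1 - 0) * (arr lam g p0 n + arr lam g (\<lambda>k. Q k 1) n)"
      using assms unfolding balance_eqs_def by (meson less_one not_le)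
    then show ?thesis
      by simp
  qed
  then show ?thesis
    unfolding arr_def by (simp add: sum_distrib_left algebra_simps)
qed

lemma balance_service_nth:
  assumes bal: "balance_eqs lam g s v a b del p0 p Q"
    and i: "a \<le> i" "i < b" and lam: "0 \<le> lam" "lam \<le> 1"
    and g: "pos_pmf g" and s: "pos_pmf (s i)"
    and p_null: "\<And>k. (\<lambda>u. p k i u) \<longlonglongrightarrow> 0"
  shows "arr lam g (\<lambda>k. p k i 1) n = service_start_mass lam g a b del p0 p Q i * kcoef lam g s i n"
proof -
  define C where "C = service_start_mass lam g a b del p0 p Q i"
  define P where "P u = Abs_fps (\<lambda>k. p k i u)" for u
  have g0: "g 0 = 0"
    using g by (simp add: pos_pmf_def)
  have P_nth: "P u $ k = p k i u" for u k
    by (simp add: P_def)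
  have arr_P: "arr lam g (\<lambda>k. p k i u) k = (arrival_fps lam g * P u) $ k" for u k
    unfolding P_def by (rule arr_eq_arrival_fps_nth[of g, OF g0])
  have rec: "P u = arrival_fps lam g * P (u + 1) + fps_const (s i u * C)" if "1 \<le> u" for u
  proof (rule fps_ext)
    fix k
    have "p k i u = arr lam g (\<lambda>k. p k i (u + 1)) k + (if k = 0 then s i u * C else 0)"
    proof (cases "k = 0")
      case True
      then show ?thesis
        using balance_eqs_empty_queue[OF bal i(1) _ that] i by (simp add: C_def arr_def)
    next
      case False
      then show ?thesis
        using balance_eqs_small_batch[OF bal _ i that] by simp
    qed
    then show "P u $ k = (arrival_fps lam g * P (u + 1) + fps_const (s i u * C)) $ k"
      by (simp add: P_nth arr_P)
  qed
  have "\<bar>(arrival_fps lam g ^ j) $ m\<bar> \<le> 1" for j m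
    using arrival_fps_power_nth[OF lam, of g j m] g by (simp add: pos_pmf_def)
  moreover have "s i 0 = 0" "summable (\<lambda>u. \<bar>s i u\<bar>)"
    using s by (simp_all add: pos_pmf_def sums_iff)
  ultimately have "(arrival_fps lam g * P 1) $ n = C * (\<Sum>u. s i u * (arrival_fps lam g ^ u) $ n)"
    using p_null by (intro remaining_time_recursion_nth[where s = "s i" and C = C, OF rec])
      (simp_all add: P_nth)
  then show ?thesis
    by (simp add: arr_P C_def kcoef_def arrival_fps_def)
qed

lemma service_start_mass_eq_ecoef:
  assumes bal: "balance_eqs lam g s v a b del p0 p Q" and del: "del = 0 \<or> del = 1"
  shows "service_start_mass lam g a b del p0 p Q r
    = (1 - del) * (\<Sum>m=0..a-1. arr lam g (\<lambda>k. Q k 1) m * (\<Sum>j=m..a-1. ecoef g j m * g (r - j)))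
      + (\<Sum>m=a..b. arr lam g (\<lambda>k. p k m 1) r) + arr lam g (\<lambda>k. Q k 1) r"
proof (cases "del = 1")
  case True
  then show ?thesis
    by (simp add: service_start_mass_def)
next
  case False
  with del have "del = 0"
    by simp
  with bal have bal0: "balance_eqs lam g s v a b 0 p0 p Q"
    by simp
  define q where "q m = arr lam g (\<lambda>k. Q k 1) m" for m
  have solved: "lam * p0 j = (\<Sum>m=0..j. ecoef g j m * q m)" if "j \<le> a - 1" for j
    using renewal_solution_ecoef[of "a - 1" "\<lambda>n. lam * p0 n" g q j]
      balance_eqs_dormant_renewal[OF bal0] that
    unfolding q_def by blast
  have "lam * (\<Sum>j=0..a-1. g (r - j) * p0 j) = (\<Sum>j=0..a-1. g (r - j) * (lam * p0 j))"
    by (simp add: sum_distrib_left algebra_simps)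
  also have "\<dots> = (\<Sum>j=0..a-1. \<Sum>m=0..j. g (r - j) * (ecoef g j m * q m))"
    by (intro sum.cong refl) (simp add: solved sum_distrib_left)
  also have "\<dots> = (\<Sum>m=0..a-1. \<Sum>j=m..a-1. g (r - j) * (ecoef g j m * q m))"
    by (rule sum_triangle_swap)
  also have "\<dots> = (\<Sum>m=0..a-1. q m * (\<Sum>j=m..a-1. ecoef g j m * g (r - j)))"
    by (simp add: sum_distrib_left algebra_simps)
  finally show ?thesis
    using \<open>del = 0\<close> by (simp add: service_start_mass_def q_def)
qed

lemma service_start_mass_div_tau:
  assumes "balance_eqs lam g s v a b del p0 p Q" and "del = 0 \<or> del = 1"
  shows "service_start_mass lam g a b del p0 p Q r / tau p Q a b
    = (1 - del) * (\<Sum>m=0..a-1. Qplus lam g p Q a b m * (\<Sum>j=m..a-1. ecoef g j m * g (r - j)))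
      + (pplus_tot lam g p Q a b r + Qplus lam g p Q a b r)"
  unfolding service_start_mass_eq_ecoef[OF assms] Qplus_def pplus_tot_def pplus_def
  by (simp add: add_divide_distrib flip: sum_divide_distrib)

theorem mainTheorem5:
  fixes lam del :: real and a b :: nat
    and g v :: "nat \<Rightarrow> real" and s :: "nat \<Rightarrow> nat \<Rightarrow> real"
    and p0 :: "nat \<Rightarrow> real" and p :: "nat \<Rightarrow> nat \<Rightarrow> nat \<Rightarrow> real" and Q :: "nat \<Rightarrow> nat \<Rightarrow> real"
  assumes ab: "1 \<le> a" "a \<le> b"
    and lam: "0 < lam" "lam < 1"
    and g: "pos_pmf g"
    and s: "\<And>r. a \<le> r \<Longrightarrow> r \<le> b \<Longrightarrow> pos_pmf (s r)"
    and v: "pos_pmf v"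
    and del: "del = 0 \<or> del = 1"
    and rho: "lam * pmf_mean g / (real b * (1 / pmf_mean (s b))) < 1"
    and nonneg: "\<And>n. p0 n \<ge> 0" "\<And>n r u. p n r u \<ge> 0" "\<And>n u. Q n u \<ge> 0"
    and bal: "balance_eqs lam g s v a b del p0 p Q"
    and summ_p: "(\<lambda>(n, r, u). p n r u) summable_on (UNIV \<times> {a..b} \<times> {1..})"
    and summ_Q: "(\<lambda>(n, u). Q n u) summable_on (UNIV \<times> {1..})"
    and norm: "(1 - del) * (\<Sum>n=0..a-1. p0 n)
               + (\<Sum>\<^sub>\<infinity>(n, r, u)\<in>UNIV \<times> {a..b} \<times> {1..}. p n r u)
               + (\<Sum>\<^sub>\<infinity>(n, u)\<in>UNIV \<times> {1..}. Q n u) = 1"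
  shows "\<forall>n i. a \<le> i \<and> i \<le> b - 1 \<longrightarrow>
    pplus lam g p Q a b n i =
      ((1 - del) * (\<Sum>m=0..a-1. Qplus lam g p Q a b m * (\<Sum>j=m..a-1. ecoef g j m * g (i - j)))
       + (pplus_tot lam g p Q a b i + Qplus lam g p Q a b i)) * kcoef lam g s i n"
proof (intro allI impI)
  fix n i
  assume "a \<le> i \<and> i \<le> b - 1"
  then have i: "a \<le> i" "i < b"
    using ab by auto
  have "arr lam g (\<lambda>k. p k i 1) n = service_start_mass lam g a b del p0 p Q i * kcoef lam g s i n"
    using lam i summable_on_slice_tendsto_zero[OF summ_p]
    by (intro balance_service_nth[OF bal] g s) auto
  then have "pplus lam g p Q a b n i
      = service_start_mass lam g a b del p0 p Q i / tau p Q a b * kcoef lam g s i n"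
    unfolding pplus_def by simp
  then show "pplus lam g p Q a b n i =
      ((1 - del) * (\<Sum>m=0..a-1. Qplus lam g p Q a b m * (\<Sum>j=m..a-1. ecoef g j m * g (i - j)))
       + (pplus_tot lam g p Q a b i + Qplus lam g p Q a b i)) * kcoef lam g s i n"
    unfolding service_start_mass_div_tau[OF bal del] .
qed

end
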